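(* Let $M$ be a matroid, $\mathcal{T}$ a tangle of $M$ of order $\theta$, and $N$ a minor of $M$ with $E(M)\setminus E(N) = \{e\}$. Let $\mathcal{T}'$ be the tangle of $N$ inherited from $\mathcal{T}$, and let $Z\subseteq E(N)$. \begin{enumerate} \item $r_{\mathcal{T}}(Z) - 1 \leq r_{\mathcal{T}'}(Z) \leq r_\mathcal{T}(Z)$; \item If $e\not\in \mathrm{cl}_\mathcal{T}(Z)$ and $r_\mathcal{T}(Z) < \theta$ then $r_{\mathcal{T}'}(Z) = r_{\mathcal{T}}(Z)$. \end{enumerate}
   Context: The connectivity function is $\lambda_M(X)=r_M(X)+r_M(E(M)\setminus X)-r(M)$. A tangle of order $\theta$ of $M$ is a collection $\mathcal{T}$ of subsets of $E(M)$ such that: every $X\in\mathcal{T}$ has $\lambda_M(X)<\theta$; for every $X$ with $\lambda_M(X)<\theta$, either $X\in\mathcal{T}$ or $E(M)\setminus X\in\mathcal{T}$; no three members of $\mathcal{T}$ cover $E(M)$; and $E(M)\setminus\{e\}\notin\mathcal{T}$ for each $e\in E(M)$. The tangle matroid $M(\mathcal{T})$ has rank function $r_\mathcal{T}(X)=\min\{\lambda_M(Y): X\subseteq Y\in\mathcal{T}\}$ if such $Y$ exists, and $\theta$ otherwise; $\mathrm{cl}_\mathcal{T}$ denotes the closure operator of $M(\mathcal{T})$. For a minor $N$ with $E(M)\setminus E(N)=S$, the tangle of $N$ inherited from $\mathcal{T}$ is $\mathcal{T}'=\{X\setminus S: X\in\mathcal{T},\ \lambda_N(X)<\theta-|S|\}$,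 a tangle of $N$ of order $\theta-|S|$; $r_{\mathcal{T}'}$ is the rank function of $N(\mathcal{T}')$. *)

theory Defs
  imports Main
begin

text \<open>A matroid is given by a finite ground set E and a rank function r
  (only its values on subsets of E matter), satisfying the rank axioms.\<close>
definition matroid :: "'a set \<Rightarrow> ('a set \<Rightarrow> nat) \<Rightarrow> bool" where
  "matroid E r \<longleftrightarrow> finite E \<and>
     (\<forall>X\<subseteq>E. r X \<le> card X) \<and>
     (\<forall>X Y. X \<subseteq> Y \<and> Y \<subseteq> E \<longrightarrow> r X \<le> r Y) \<and>
     (\<forall>X Y. X \<subseteq> E \<and> Y \<subseteq> E \<longrightarrow> r (X \<union> Y) + r (X \<inter> Y) \<le> r X + r Y)"

definition conn :: "'a set \<Rightarrow> ('a set \<Rightarrow> nat) \<Rightarrow> 'a set \<Rightarrow> int" where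
  "conn E r X = int (r X) + int (r (E - X)) - int (r E)"

definition tangle :: "'a set \<Rightarrow> ('a set \<Rightarrow> nat) \<Rightarrow> nat \<Rightarrow> 'a set set \<Rightarrow> bool" where
  "tangle E r \<theta> T \<longleftrightarrow>
     (\<forall>X\<in>T. X \<subseteq> E \<and> conn E r X < int \<theta>) \<and>
     (\<forall>X. X \<subseteq> E \<and> conn E r X < int \<theta> \<longrightarrow> X \<in> T \<or> E - X \<in> T) \<and>
     (\<forall>A\<in>T. \<forall>B\<in>T. \<forall>C\<in>T. A \<union> B \<union> C \<noteq> E) \<and>
     (\<forall>e\<in>E. E - {e} \<notin> T)"

definition tangle_rank :: "'a set \<Rightarrow> ('a set \<Rightarrow> nat) \<Rightarrow> nat \<Rightarrow> 'a set set \<Rightarrow> 'a set \<Rightarrow> int" where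
  "tangle_rank E r \<theta> T X =
     (if \<exists>Y\<in>T. X \<subseteq> Y then Min {conn E r Y | Y. Y \<in> T \<and> X \<subseteq> Y} else int \<theta>)"

definition tangle_cl :: "'a set \<Rightarrow> ('a set \<Rightarrow> nat) \<Rightarrow> nat \<Rightarrow> 'a set set \<Rightarrow> 'a set \<Rightarrow> 'a set" where
  "tangle_cl E r \<theta> T X = {x\<in>E. tangle_rank E r \<theta> T (insert x X) = tangle_rank E r \<theta> T X}"

definition delete_rank :: "('a set \<Rightarrow> nat) \<Rightarrow> 'a \<Rightarrow> 'a set \<Rightarrow> nat" where
  "delete_rank r e X = r X"

definition contract_rank :: "('a set \<Rightarrow> nat) \<Rightarrow> 'a \<Rightarrow> 'a set \<Rightarrow> nat" where
  "contract_rank r e X = r (insert e X) - r {e}"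

definition single_minor :: "'a set \<Rightarrow> ('a set \<Rightarrow> nat) \<Rightarrow> 'a \<Rightarrow> ('a set \<Rightarrow> nat) \<Rightarrow> bool" where
  "single_minor E r e rN \<longleftrightarrow> e \<in> E \<and>
     ((\<forall>X\<subseteq>E - {e}. rN X = delete_rank r e X) \<or> (\<forall>X\<subseteq>E - {e}. rN X = contract_rank r e X))"

definition inherited_tangle :: "'a set \<Rightarrow> ('a set \<Rightarrow> nat) \<Rightarrow> nat \<Rightarrow> 'a set set \<Rightarrow> 'a set \<Rightarrow> ('a set \<Rightarrow> nat) \<Rightarrow> 'a set set" where
  "inherited_tangle E r \<theta> T S rN =
     {X - S | X. X \<in> T \<and> conn (E - S) rN (X - S) < int \<theta> - int (card S)}"

end

theory Submission
  imports Defs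
begin

text \<open>Deleting or contracting e changes the connectivity of every set by 0 or 1, once e is put
  on the side that makes the set a subset of E - {e}. Comparing the minimising members of the two
  tangles gives r_T - 1 \<le> r_T' \<le> r_T. For the equality case take a member Y of the inherited
  tangle realising r_T'(Z). If e lies in the member of T that Y comes from, or if Y \<union> {e} \<in> T,
  then r_T(Z \<union> {e}) \<le> \<lambda>_N(Y) + 1; and Y \<union> {e} \<in> T is forced, since otherwise Y, the complement
  of Y \<union> {e} and {e} would be three members of T covering E. As e \<notin> cl_T(Z) means
  r_T(Z) < r_T(Z \<union> {e}), this gives r_T(Z) \<le> r_T'(Z).\<close>

lemma matroid_finite: "matroid E r \<Longrightarrow> finite E"
  unfolding matroid_def by blast

lemma matroid_rank_le_card: "matroid E r \<Longrightarrow> X \<subseteq> E \<Longrightarrow> r X \<le> card X"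
  unfolding matroid_def by blast

lemma matroid_rank_mono: "matroid E r \<Longrightarrow> X \<subseteq> Y \<Longrightarrow> Y \<subseteq> E \<Longrightarrow> r X \<le> r Y"
  unfolding matroid_def by blast

lemma matroid_rank_submod:
  "matroid E r \<Longrightarrow> X \<subseteq> E \<Longrightarrow> Y \<subseteq> E \<Longrightarrow> r (X \<union> Y) + r (X \<inter> Y) \<le> r X + r Y"
  unfolding matroid_def by blast

lemma matroid_rank_singleton_le_1: "matroid E r \<Longrightarrow> e \<in> E \<Longrightarrow> r {e} \<le> 1"
  using matroid_rank_le_card[of E r "{e}"] by simp

lemma matroid_rank_insert_le:
  assumes M: "matroid E r" and "X \<subseteq> E" "e \<in> E"
  shows "r (insert e X) \<le> r X + 1"
proof -
  have "r (X \<union> {e}) + r (X \<inter> {e}) \<le> r X + r {e}"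
    using matroid_rank_submod[OF M] assms by blast
  then show ?thesis using matroid_rank_singleton_le_1[OF M \<open>e \<in> E\<close>] by simp
qed

lemma matroid_rank_insert_submod:
  assumes M: "matroid E r" and "X \<subseteq> E" "e \<in> E" "e \<notin> X"
  shows "r (insert e X) \<le> r X + r {e}"
  using matroid_rank_submod[OF M, of X "{e}"] assms by simp

lemma matroid_cong:
  assumes M: "matroid E r" and eq: "\<And>X. X \<subseteq> E \<Longrightarrow> r X = r' X"
  shows "matroid E r'"
  unfolding matroid_def
proof (intro conjI allI impI)
  show "finite E" using matroid_finite[OF M] .
next
  fix X assume "X \<subseteq> E"
  then show "r' X \<le> card X" using matroid_rank_le_card[OF M] eq by metis
next
  fix X Y assume "X \<subseteq> Y \<and> Y \<subseteq> E"
  then show "r' X \<le> r' Y" using matroid_rank_mono[OF M, of X Y] eq[of X] eq[of Y] by auto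
next
  fix X Y assume XY: "X \<subseteq> E \<and> Y \<subseteq> E"
  then have "X \<union> Y \<subseteq> E" "X \<inter> Y \<subseteq> E" by auto
  then show "r' (X \<union> Y) + r' (X \<inter> Y) \<le> r' X + r' Y"
    using matroid_rank_submod[OF M, of X Y] XY eq by metis
qed

lemma matroid_restrict: "matroid E r \<Longrightarrow> E' \<subseteq> E \<Longrightarrow> matroid E' r"
  unfolding matroid_def by (meson finite_subset subset_trans)

lemma matroid_delete: "matroid E r \<Longrightarrow> matroid (E - {e}) (delete_rank r e)"
  unfolding delete_rank_def by (rule matroid_restrict) auto

lemma matroid_contract:
  assumes M: "matroid E r" and e: "e \<in> E"
  shows "matroid (E - {e}) (contract_rank r e)"
  unfolding matroid_def
proof (intro conjI allI impI)
  show "finite (E - {e})" using matroid_finite[OF M] by simp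
next
  fix X assume X: "X \<subseteq> E - {e}"
  then have XE: "X \<subseteq> E" "e \<notin> X" by auto
  have "r (insert e X) \<le> r X + r {e}" using matroid_rank_insert_submod[OF M XE(1) e XE(2)] .
  moreover have "r X \<le> card X" using matroid_rank_le_card[OF M XE(1)] .
  ultimately show "contract_rank r e X \<le> card X" unfolding contract_rank_def by linarith
next
  fix X Y assume "X \<subseteq> Y \<and> Y \<subseteq> E - {e}"
  then have "insert e X \<subseteq> insert e Y" "insert e Y \<subseteq> E" using e by auto
  then have "r (insert e X) \<le> r (insert e Y)" by (rule matroid_rank_mono[OF M])
  then show "contract_rank r e X \<le> contract_rank r e Y"
    unfolding contract_rank_def by (rule diff_le_mono)
next
  fix X Y assume "X \<subseteq> E - {e} \<and> Y \<subseteq> E - {e}"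
  then have sub: "insert e X \<subseteq> E" "insert e Y \<subseteq> E" using e by auto
  have "insert e X \<union> insert e Y = insert e (X \<union> Y)" "insert e X \<inter> insert e Y = insert e (X \<inter> Y)"
    by auto
  then have "r (insert e (X \<union> Y)) + r (insert e (X \<inter> Y)) \<le> r (insert e X) + r (insert e Y)"
    using matroid_rank_submod[OF M sub] by simp
  moreover have "r {e} \<le> r (insert e W)" if "insert e W \<subseteq> E" for W
    using matroid_rank_mono[OF M _ that] by simp
  moreover have "insert e (X \<inter> Y) \<subseteq> E" using sub by blast
  ultimately show "contract_rank r e (X \<union> Y) + contract_rank r e (X \<inter> Y)
      \<le> contract_rank r e X + contract_rank r e Y"
    using sub unfolding contract_rank_def by fastforce
qed

lemma matroid_single_minor: "matroid E r \<Longrightarrow> single_minor E r e rN \<Longrightarrow> matroid (E - {e}) rN"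
  unfolding single_minor_def using matroid_cong matroid_delete matroid_contract by metis

lemma conn_compl: "X \<subseteq> E \<Longrightarrow> conn E r (E - X) = conn E r X"
  unfolding conn_def by (simp add: double_diff)

lemma conn_cong: "(\<And>X. X \<subseteq> E \<Longrightarrow> r X = r' X) \<Longrightarrow> Y \<subseteq> E \<Longrightarrow> conn E r Y = conn E r' Y"
  unfolding conn_def by auto

lemma conn_nonneg:
  assumes M: "matroid E r" and "X \<subseteq> E"
  shows "0 \<le> conn E r X"
proof -
  have "r (X \<union> (E - X)) + r (X \<inter> (E - X)) \<le> r X + r (E - X)"
    using matroid_rank_submod[OF M] assms by blast
  moreover have "X \<union> (E - X) = E" using assms(2) by blast
  ultimately show ?thesis unfolding conn_def by simp
qed

lemma conn_singleton_le_1: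
  assumes M: "matroid E r" and "e \<in> E"
  shows "conn E r {e} \<le> 1"
proof -
  have "r {e} \<le> 1" using matroid_rank_singleton_le_1[OF assms] .
  moreover have "r (E - {e}) \<le> r E" using matroid_rank_mono[OF M, of "E - {e}" E] by blast
  ultimately show ?thesis unfolding conn_def by linarith
qed

lemma conn_delete_bounds:
  assumes M: "matroid E r" and e: "e \<in> E" and Y: "Y \<subseteq> E - {e}"
  shows "conn (E - {e}) (delete_rank r e) Y \<le> conn E r Y"
    and "conn E r Y \<le> conn (E - {e}) (delete_rank r e) Y + 1"
proof -
  define Y' where "Y' = E - Y - {e}"
  have compl: "E - {e} - Y = Y'" and ins: "insert e Y' = E - Y"
    using e Y unfolding Y'_def by auto
  have "r E + r Y' \<le> r (E - Y) + r (E - {e})"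
  proof -
    have "(E - Y) \<union> (E - {e}) = E" "(E - Y) \<inter> (E - {e}) = Y'" using e Y unfolding Y'_def by auto
    then show ?thesis using matroid_rank_submod[OF M, of "E - Y" "E - {e}"] by simp
  qed
  moreover have "r (E - Y) \<le> r Y' + 1"
    unfolding ins[symmetric] by (rule matroid_rank_insert_le[OF M _ e]) (auto simp: Y'_def)
  moreover have "r (E - {e}) \<le> r E" using matroid_rank_mono[OF M, of "E - {e}" E] by blast
  ultimately show "conn (E - {e}) (delete_rank r e) Y \<le> conn E r Y"
    and "conn E r Y \<le> conn (E - {e}) (delete_rank r e) Y + 1"
    unfolding conn_def delete_rank_def compl by linarith+
qed

lemma contract_rank_int:
  assumes M: "matroid E r" and "e \<in> E" "X \<subseteq> E"
  shows "int (contract_rank r e X) = int (r (insert e X)) - int (r {e})"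
  using matroid_rank_mono[OF M, of "{e}" "insert e X"] assms unfolding contract_rank_def by simp

lemma conn_contract_bounds:
  assumes M: "matroid E r" and e: "e \<in> E" and Y: "Y \<subseteq> E - {e}"
  shows "conn (E - {e}) (contract_rank r e) Y \<le> conn E r Y"
    and "conn E r Y \<le> conn (E - {e}) (contract_rank r e) Y + 1"
proof -
  have ins: "insert e (E - {e} - Y) = E - Y" "insert e (E - {e}) = E" using e Y by auto
  have YE: "Y \<subseteq> E" "e \<notin> Y" using Y by auto
  have "int (contract_rank r e Y) = int (r (insert e Y)) - int (r {e})"
    and "int (contract_rank r e (E - {e} - Y)) = int (r (E - Y)) - int (r {e})"
    and "int (contract_rank r e (E - {e})) = int (r E) - int (r {e})"
    using contract_rank_int[OF M e] YE ins by (metis Diff_subset subset_trans)+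
  moreover have "r (insert e Y) \<le> r Y + r {e}"
    using matroid_rank_insert_submod[OF M YE(1) e YE(2)] .
  moreover have "r Y \<le> r (insert e Y)" using matroid_rank_mono[OF M, of Y "insert e Y"] YE e by blast
  moreover have "r {e} \<le> 1" using matroid_rank_singleton_le_1[OF M e] .
  ultimately show "conn (E - {e}) (contract_rank r e) Y \<le> conn E r Y"
    and "conn E r Y \<le> conn (E - {e}) (contract_rank r e) Y + 1"
    unfolding conn_def by linarith+
qed

lemma conn_single_minor_bounds:
  assumes M: "matroid E r" and S: "single_minor E r e rN" and Y: "Y \<subseteq> E - {e}"
  shows "conn (E - {e}) rN Y \<le> conn E r Y" and "conn E r Y \<le> conn (E - {e}) rN Y + 1"
proof -
  have e: "e \<in> E" using S unfolding single_minor_def by blast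
  from S consider (deletion) "\<forall>X\<subseteq>E - {e}. rN X = delete_rank r e X"
    | (contraction) "\<forall>X\<subseteq>E - {e}. rN X = contract_rank r e X"
    unfolding single_minor_def by blast
  then have "conn (E - {e}) rN Y \<le> conn E r Y \<and> conn E r Y \<le> conn (E - {e}) rN Y + 1"
  proof cases
    case deletion
    then have "conn (E - {e}) rN Y = conn (E - {e}) (delete_rank r e) Y"
      by (intro conn_cong[OF _ Y]) blast
    with conn_delete_bounds[OF M e Y] show ?thesis by simp
  next
    case contraction
    then have "conn (E - {e}) rN Y = conn (E - {e}) (contract_rank r e) Y"
      by (intro conn_cong[OF _ Y]) blast
    with conn_contract_bounds[OF M e Y] show ?thesis by simp
  qed
  then show "conn (E - {e}) rN Y \<le> conn E r Y" and "conn E r Y \<le> conn (E - {e}) rN Y + 1"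
    by auto
qed

lemma conn_single_minor_Diff_bounds:
  assumes M: "matroid E r" and S: "single_minor E r e rN" and X: "X \<subseteq> E"
  shows "conn (E - {e}) rN (X - {e}) \<le> conn E r X"
    and "conn E r X \<le> conn (E - {e}) rN (X - {e}) + 1"
proof -
  obtain Y where Y: "Y \<subseteq> E - {e}" "conn E r X = conn E r Y"
    "conn (E - {e}) rN (X - {e}) = conn (E - {e}) rN Y"
  proof (cases "e \<in> X")
    case True
    have sub: "E - X \<subseteq> E - {e}" using True by blast
    have "E - {e} - (E - X) = X - {e}" using X by blast
    then have conn_N: "conn (E - {e}) rN (X - {e}) = conn (E - {e}) rN (E - X)"
      using conn_compl[OF sub, of rN] by simp
    show thesis by (rule that[OF sub _ conn_N]) (simp add: conn_compl[OF X])
  next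
    case False
    show thesis by (rule that[of X]) (use X False in auto)
  qed
  show "conn (E - {e}) rN (X - {e}) \<le> conn E r X"
    and "conn E r X \<le> conn (E - {e}) rN (X - {e}) + 1"
    using conn_single_minor_bounds[OF M S Y(1)] Y(2,3) by linarith+
qed

lemma tangle_subset: "tangle E r \<theta> T \<Longrightarrow> X \<in> T \<Longrightarrow> X \<subseteq> E"
  unfolding tangle_def by (drule conjunct1) blast

lemma tangle_conn_less: "tangle E r \<theta> T \<Longrightarrow> X \<in> T \<Longrightarrow> conn E r X < int \<theta>"
  unfolding tangle_def by (drule conjunct1) blast

lemma tangle_mem_or_compl:
  "tangle E r \<theta> T \<Longrightarrow> X \<subseteq> E \<Longrightarrow> conn E r X < int \<theta> \<Longrightarrow> X \<in> T \<or> E - X \<in> T"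
  unfolding tangle_def by (drule conjunct2, drule conjunct1) blast

lemma tangle_no_cover:
  "tangle E r \<theta> T \<Longrightarrow> A \<in> T \<Longrightarrow> B \<in> T \<Longrightarrow> C \<in> T \<Longrightarrow> A \<union> B \<union> C \<noteq> E"
  unfolding tangle_def by (drule conjunct2, drule conjunct2, drule conjunct1) simp

lemma tangle_no_hyperplane_complement: "tangle E r \<theta> T \<Longrightarrow> e \<in> E \<Longrightarrow> E - {e} \<notin> T"
  unfolding tangle_def by (drule conjunct2, drule conjunct2, drule conjunct2) simp

lemma tangle_finite: "tangle E r \<theta> T \<Longrightarrow> finite E \<Longrightarrow> finite T"
  by (rule finite_subset[of T "Pow E"]) (auto dest: tangle_subset)

lemma tangle_insert_mem:
  assumes M: "matroid E r" and T: "tangle E r \<theta> T" and Y: "Y \<in> T" and e: "e \<in> E"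
    and conn_insert: "conn E r (insert e Y) < int \<theta>" and order: "1 < \<theta>"
  shows "insert e Y \<in> T"
proof (rule ccontr)
  assume "insert e Y \<notin> T"
  then have compl: "E - insert e Y \<in> T"
    using tangle_mem_or_compl[OF T _ conn_insert] tangle_subset[OF T Y] e by blast
  have "conn E r {e} < int \<theta>" using conn_singleton_le_1[OF M e] order by linarith
  then have "{e} \<in> T"
    using tangle_mem_or_compl[OF T, of "{e}"] tangle_no_hyperplane_complement[OF T e] e by blast
  moreover have "Y \<union> (E - insert e Y) \<union> {e} = E" using tangle_subset[OF T Y] e by blast
  ultimately show False using tangle_no_cover[OF T Y compl] by blast
qed

lemma tangle_rank_le_conn:
  assumes "finite T" "Y \<in> T" "Z \<subseteq> Y"
  shows "tangle_rank E r \<theta> T Z \<le> conn E r Y"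
proof -
  have "{conn E r Y | Y. Y \<in> T \<and> Z \<subseteq> Y} = conn E r ` {Y \<in> T. Z \<subseteq> Y}" by blast
  then show ?thesis unfolding tangle_rank_def using assms by (auto intro!: Min_le)
qed

lemma tangle_rank_cases:
  assumes "finite T"
  obtains (attained) Y where "Y \<in> T" "Z \<subseteq> Y" "tangle_rank E r \<theta> T Z = conn E r Y"
    | (none) "\<forall>Y\<in>T. \<not> Z \<subseteq> Y" "tangle_rank E r \<theta> T Z = int \<theta>"
proof (cases "\<exists>Y\<in>T. Z \<subseteq> Y")
  case True
  have eq: "{conn E r Y | Y. Y \<in> T \<and> Z \<subseteq> Y} = conn E r ` {Y \<in> T. Z \<subseteq> Y}" by blast
  have "Min (conn E r ` {Y \<in> T. Z \<subseteq> Y}) \<in> conn E r ` {Y \<in> T. Z \<subseteq> Y}"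
    using True assms by (intro Min_in) auto
  then show thesis using True attained unfolding tangle_rank_def eq by auto
next
  case False
  then show thesis using none unfolding tangle_rank_def by auto
qed

lemma tangle_rank_le_order:
  assumes "finite T" "\<forall>Y\<in>T. conn E r Y \<le> int \<theta>"
  shows "tangle_rank E r \<theta> T Z \<le> int \<theta>"
  by (rule tangle_rank_cases[OF assms(1), where E = E and r = r and \<theta> = \<theta> and Z = Z])
    (use assms in auto)

lemma tangle_rank_mono:
  assumes "finite T" "\<forall>Y\<in>T. conn E r Y \<le> int \<theta>" "Z \<subseteq> Z'"
  shows "tangle_rank E r \<theta> T Z \<le> tangle_rank E r \<theta> T Z'"
proof (rule tangle_rank_cases[OF assms(1), where E = E and r = r and \<theta> = \<theta> and Z = Z'])
  fix Y assume "Y \<in> T" "Z' \<subseteq> Y" "tangle_rank E r \<theta> T Z' = conn E r Y"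
  then show ?thesis using tangle_rank_le_conn[OF assms(1), of Y Z] assms(3) by simp
next
  assume "tangle_rank E r \<theta> T Z' = int \<theta>"
  then show ?thesis using tangle_rank_le_order[OF assms(1,2)] by simp
qed

lemma tangle_rank_less_insert:
  assumes "finite T" "\<forall>Y\<in>T. conn E r Y \<le> int \<theta>" "x \<in> E" "x \<notin> tangle_cl E r \<theta> T Z"
  shows "tangle_rank E r \<theta> T Z < tangle_rank E r \<theta> T (insert x Z)"
  using tangle_rank_mono[OF assms(1,2), of Z "insert x Z"] assms(3,4)
  unfolding tangle_cl_def by fastforce

lemma mem_inherited_tangle_singleton:
  "Y \<in> inherited_tangle E r \<theta> T {e} rN
    \<longleftrightarrow> (\<exists>X\<in>T. Y = X - {e} \<and> conn (E - {e}) rN Y < int \<theta> - 1)"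
  unfolding inherited_tangle_def by auto

lemma finite_inherited_tangle: "finite T \<Longrightarrow> finite (inherited_tangle E r \<theta> T S rN)"
  unfolding inherited_tangle_def by (rule finite_subset[of _ "(\<lambda>X. X - S) ` T"]) auto

locale tangle_single_minor =
  fixes E :: "'a set" and r :: "'a set \<Rightarrow> nat" and \<theta> :: nat and T :: "'a set set"
    and e :: 'a and rN :: "'a set \<Rightarrow> nat"
  assumes matroid: "matroid E r" and tangle: "tangle E r \<theta> T" and minor: "single_minor E r e rN"
begin

abbreviation \<rho> :: "'a set \<Rightarrow> int" where
  "\<rho> \<equiv> tangle_rank E r \<theta> T"

abbreviation \<rho>' :: "'a set \<Rightarrow> int" where
  "\<rho>' \<equiv> tangle_rank (E - {e}) rN (\<theta> - 1) (inherited_tangle E r \<theta> T {e} rN)"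

lemma e_mem: "e \<in> E"
  using minor unfolding single_minor_def by blast

lemma finite_T: "finite T"
  using tangle_finite[OF tangle matroid_finite[OF matroid]] .

lemma finite_T': "finite (inherited_tangle E r \<theta> T {e} rN)"
  using finite_inherited_tangle[OF finite_T] .

lemma conn_T_le_order: "\<forall>Y\<in>T. conn E r Y \<le> int \<theta>"
  using tangle_conn_less[OF tangle] by fastforce

lemma conn_T'_le_order: "\<forall>Y\<in>inherited_tangle E r \<theta> T {e} rN. conn (E - {e}) rN Y \<le> int (\<theta> - 1)"
proof
  fix Y assume "Y \<in> inherited_tangle E r \<theta> T {e} rN"
  then have "conn (E - {e}) rN Y < int \<theta> - 1" unfolding mem_inherited_tangle_singleton by blast
  then show "conn (E - {e}) rN Y \<le> int (\<theta> - 1)" by linarith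
qed

lemma inherited_rank_le_rank:
  assumes Z: "Z \<subseteq> E - {e}"
  shows "\<rho>' Z \<le> \<rho> Z"
proof (rule tangle_rank_cases[OF finite_T, where E = E and r = r and \<theta> = \<theta> and Z = Z])
  fix Y assume Y: "Y \<in> T" "Z \<subseteq> Y" "\<rho> Z = conn E r Y"
  have YE: "Y \<subseteq> E" using tangle_subset[OF tangle Y(1)] .
  have drop: "conn (E - {e}) rN (Y - {e}) \<le> conn E r Y"
    using conn_single_minor_Diff_bounds(1)[OF matroid minor YE] .
  show ?thesis
  proof (cases "conn (E - {e}) rN (Y - {e}) < int \<theta> - 1")
    case True
    then have "Y - {e} \<in> inherited_tangle E r \<theta> T {e} rN"
      using Y(1) unfolding mem_inherited_tangle_singleton by blast
    moreover have "Z \<subseteq> Y - {e}" using Y(2) Z by blast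
    ultimately have "\<rho>' Z \<le> conn (E - {e}) rN (Y - {e})" by (rule tangle_rank_le_conn[OF finite_T'])
    then show ?thesis using drop Y(3) by linarith
  next
    case False
    have "0 \<le> conn E r Y" using conn_nonneg[OF matroid YE] .
    then have "1 \<le> \<theta>" using tangle_conn_less[OF tangle Y(1)] by linarith
    then show ?thesis
      using False drop Y(3) tangle_rank_le_order[OF finite_T' conn_T'_le_order, of Z] by linarith
  qed
next
  assume "\<rho> Z = int \<theta>"
  then show ?thesis using tangle_rank_le_order[OF finite_T' conn_T'_le_order, of Z] by linarith
qed

lemma rank_le_inherited_rank_plus_1: "\<rho> Z \<le> \<rho>' Z + 1"
proof (rule tangle_rank_cases[OF finite_T', where E = "E - {e}" and r = rN and \<theta> = "\<theta> - 1" and Z = Z])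
  fix Y assume Y: "Y \<in> inherited_tangle E r \<theta> T {e} rN" "Z \<subseteq> Y" "\<rho>' Z = conn (E - {e}) rN Y"
  then obtain X where X: "X \<in> T" "Y = X - {e}" unfolding mem_inherited_tangle_singleton by blast
  have "\<rho> Z \<le> conn E r X" using tangle_rank_le_conn[OF finite_T X(1)] Y(2) X(2) by blast
  also have "\<dots> \<le> conn (E - {e}) rN Y + 1"
    using conn_single_minor_Diff_bounds(2)[OF matroid minor tangle_subset[OF tangle X(1)]] X(2) by simp
  finally show ?thesis using Y(3) by simp
next
  assume "\<rho>' Z = int (\<theta> - 1)"
  then show ?thesis using tangle_rank_le_order[OF finite_T conn_T_le_order, of Z] by linarith
qed

lemma rank_le_inherited_rank:
  assumes not_cl: "e \<notin> tangle_cl E r \<theta> T Z" and below: "\<rho> Z < int \<theta>"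
  shows "\<rho> Z \<le> \<rho>' Z"
proof (rule tangle_rank_cases[OF finite_T', where E = "E - {e}" and r = rN and \<theta> = "\<theta> - 1" and Z = Z])
  fix Y assume Y: "Y \<in> inherited_tangle E r \<theta> T {e} rN" "Z \<subseteq> Y" "\<rho>' Z = conn (E - {e}) rN Y"
  then obtain X where X: "X \<in> T" "Y = X - {e}" and small: "conn (E - {e}) rN Y < int \<theta> - 1"
    unfolding mem_inherited_tangle_singleton by blast
  have XE: "X \<subseteq> E" using tangle_subset[OF tangle X(1)] .
  have "\<rho> (insert e Z) \<le> conn (E - {e}) rN Y + 1"
  proof (cases "e \<in> X")
    case True
    then have "insert e Z \<subseteq> X" using Y(2) X(2) by blast
    then have "\<rho> (insert e Z) \<le> conn E r X" by (rule tangle_rank_le_conn[OF finite_T X(1)])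
    then show ?thesis using conn_single_minor_Diff_bounds(2)[OF matroid minor XE] X(2) by simp
  next
    case False
    then have YT: "Y \<in> T" and YE: "Y \<subseteq> E - {e}" using X XE by auto
    have "insert e Y \<subseteq> E" "insert e Y - {e} = Y" using YE e_mem by auto
    then have up: "conn E r (insert e Y) \<le> conn (E - {e}) rN Y + 1"
      using conn_single_minor_Diff_bounds(2)[OF matroid minor, of "insert e Y"] by simp
    have "0 \<le> conn (E - {e}) rN Y"
      using conn_nonneg[OF matroid_single_minor[OF matroid minor] YE] .
    then have "insert e Y \<in> T"
      using tangle_insert_mem[OF matroid tangle YT e_mem] up small by linarith
    moreover have "insert e Z \<subseteq> insert e Y" using Y(2) by blast
    ultimately have "\<rho> (insert e Z) \<le> conn E r (insert e Y)"
      by (rule tangle_rank_le_conn[OF finite_T])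
    with up show ?thesis by simp
  qed
  moreover have "\<rho> Z < \<rho> (insert e Z)"
    using tangle_rank_less_insert[OF finite_T conn_T_le_order e_mem not_cl] .
  ultimately show ?thesis using Y(3) by linarith
next
  assume "\<rho>' Z = int (\<theta> - 1)"
  then show ?thesis using below by linarith
qed

end

theorem lemma2p31:
  fixes E :: "'a set" and r rN :: "'a set \<Rightarrow> nat" and \<theta> :: nat
    and T :: "'a set set" and e :: 'a and Z :: "'a set"
  assumes "matroid E r"
    and "tangle E r \<theta> T"
    and "single_minor E r e rN"
    and "Z \<subseteq> E - {e}"
  defines "T' \<equiv> inherited_tangle E r \<theta> T {e} rN"
  shows "(tangle_rank E r \<theta> T Z - 1 \<le> tangle_rank (E - {e}) rN (\<theta> - 1) T' Z
         \<and> tangle_rank (E - {e}) rN (\<theta> - 1) T' Z \<le> tangle_rank E r \<theta> T Z)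
         \<and> (e \<notin> tangle_cl E r \<theta> T Z \<and> tangle_rank E r \<theta> T Z < int \<theta>
         \<longrightarrow> tangle_rank (E - {e}) rN (\<theta> - 1) T' Z = tangle_rank E r \<theta> T Z)"
proof -
  interpret tangle_single_minor E r \<theta> T e rN
    using assms(1-3) by unfold_locales
  show ?thesis
    unfolding T'_def
    using rank_le_inherited_rank_plus_1[of Z] inherited_rank_le_rank[OF assms(4)] rank_le_inherited_rank[of Z]
    by force
qed

end
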